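(* Let $n\ge 1$ be an integer, let $C_t$ be a Liu process, and let $f,g:[0,\infty)\times\mathbb{R}^{n}\to\mathbb{R}$ be continuous functions. Let $X_t$ be a solution of the $n$-th order uncertain differential equation $$X_t^{(n)}=f\big(t,X_t,X_t^{(1)},\dots,X_t^{(n-1)}\big)+g\big(t,X_t,X_t^{(1)},\dots,X_t^{(n-1)}\big)\dot{C}_t$$ with initial conditions $X^{(k)}_0=X_0^{k}$ for $k=0,1,\dots,n-1$ (where $X_0^k$ are given real numbers). Then for every $t\ge 0$, $$X_t=\sum_{k=0}^{n-1}\frac{t^k}{k!}X_0^{k}+\frac{1}{(n-1)!}\int_{0}^{t}(t-s)^{n-1}f\big(s,X_s,X_s^{(1)},\dots,X_s^{(n-1)}\big)\,{\rm d}s+\frac{1}{(n-1)!}\int_{0}^{t}(t-s)^{n-1}g\big(s,X_s,X_s^{(1)},\dots,X_s^{(n-1)}\big)\,{\rm d}C_s,$$ where the last integral is a Liu integral.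
   Context: An uncertainty space is a triple $(\Gamma,\mathcal{L},\mathcal{M})$ where $\Gamma$ is a nonempty set, $\mathcal{L}$ a $\sigma$-algebra on $\Gamma$ and $\mathcal{M}$ an uncertain measure (in the sense of Liu's uncertainty theory). A Liu process $C_t$ is an uncertain process with $C_0=0$, almost all sample paths Lipschitz continuous, stationary and independent increments, and each increment $C_{s+t}-C_s$ a normal uncertain variable with expected value $0$ and variance $t^2$. For an uncertain process $Z_t$, the Liu integral is $\int_0^a Z_t\,{\rm d}C_t=\lim_{\Delta\to0}\sum_{i=1}^k Z_{t_i}(C_{t_{i+1}}-C_{t_i})$ over partitions $0=t_1<\dots<t_{k+1}=a$ with mesh $\Delta=\max_i|t_{i+1}-t_i|$, provided the limit exists almost surely and is finite. $\dot C_t$ denotes the formal derivative ${\rm d}C_t/{\rm d}t$. An uncertain process $X_t$ is called a solution of the $n$-th order uncertain differential equation above with initial values $X_0^k$ (the value of the $k$-th derivative at $0$, $X_0^0=X_0$) if it satisfies the uncertain integral equation $$X_t=\sum_{i=0}^{n-1}\frac{t^i}{i!}X_0^{i}+\int_0^t\int_0^{t_1}\!\!\cdots\int_0^{t_{n-1}} f\big(t_n,X_{t_n},\dots,X^{(n-1)}_{t_n}\big)\,{\rm d}t_n\,{\rm d}t_{n-1}\cdots{\rm d}t_1+\int_0^t\int_0^{t_1}\!\!\cdots\int_0^{t_{n-1}} g\big(t_n,X_{t_n},\dots,X^{(n-1)}_{t_n}\big)\,{\rm d}C_{t_n}\,{\rm d}t_{n-1}\cdots{\rm d}t_1$$ for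 all $t\ge0$, where $X^{(k)}$ denotes the $k$-th derivative in $t$. *)

theory Defs
  imports "HOL-Analysis.Analysis"
begin

definition uncertain_measure :: "'g set \<Rightarrow> 'g set set \<Rightarrow> ('g set \<Rightarrow> real) \<Rightarrow> bool" where
  "uncertain_measure \<Gamma> L M \<longleftrightarrow>
     M \<Gamma> = 1 \<and>
     (\<forall>A\<in>L. M A + M (\<Gamma> - A) = 1) \<and>
     (\<forall>A :: nat \<Rightarrow> 'g set. (\<forall>i. A i \<in> L) \<longrightarrow> summable (\<lambda>i. M (A i)) \<longrightarrow>
         M (\<Union>i. A i) \<le> (\<Sum>i. M (A i)))"

definition uncertainty_space :: "'g set \<Rightarrow> 'g set set \<Rightarrow> ('g set \<Rightarrow> real) \<Rightarrow> bool" where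
  "uncertainty_space \<Gamma> L M \<longleftrightarrow> \<Gamma> \<noteq> {} \<and> sigma_algebra \<Gamma> L \<and> uncertain_measure \<Gamma> L M"

definition uncertain_variable :: "'g set \<Rightarrow> 'g set set \<Rightarrow> ('g \<Rightarrow> real) \<Rightarrow> bool" where
  "uncertain_variable \<Gamma> L \<xi> \<longleftrightarrow> (\<forall>B\<in>sets borel. {\<gamma>\<in>\<Gamma>. \<xi> \<gamma> \<in> B} \<in> L)"

definition unc_dist :: "'g set \<Rightarrow> ('g set \<Rightarrow> real) \<Rightarrow> ('g \<Rightarrow> real) \<Rightarrow> real \<Rightarrow> real" where
  "unc_dist \<Gamma> M \<xi> x = M {\<gamma>\<in>\<Gamma>. \<xi> \<gamma> \<le> x}"

text \<open>Normal uncertain variable N(e, sigma), sigma > 0 (expected value e, variance sigma^2).\<close>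
definition normal_uncertain :: "'g set \<Rightarrow> 'g set set \<Rightarrow> ('g set \<Rightarrow> real) \<Rightarrow> ('g \<Rightarrow> real) \<Rightarrow> real \<Rightarrow> real \<Rightarrow> bool" where
  "normal_uncertain \<Gamma> L M \<xi> e \<sigma> \<longleftrightarrow> uncertain_variable \<Gamma> L \<xi> \<and>
     (\<forall>x. unc_dist \<Gamma> M \<xi> x = inverse (1 + exp (pi * (e - x) / (sqrt 3 * \<sigma>))))"

definition unc_indep :: "'g set \<Rightarrow> ('g set \<Rightarrow> real) \<Rightarrow> nat \<Rightarrow> (nat \<Rightarrow> 'g \<Rightarrow> real) \<Rightarrow> bool" where
  "unc_indep \<Gamma> M k \<xi> \<longleftrightarrow>
     (\<forall>B :: nat \<Rightarrow> real set. (\<forall>i\<le>k. B i \<in> sets borel) \<longrightarrow>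
        M {\<gamma>\<in>\<Gamma>. \<forall>i\<le>k. \<xi> i \<gamma> \<in> B i} = Min ((\<lambda>i. M {\<gamma>\<in>\<Gamma>. \<xi> i \<gamma> \<in> B i}) ` {..k}))"

definition liu_process :: "'g set \<Rightarrow> 'g set set \<Rightarrow> ('g set \<Rightarrow> real) \<Rightarrow> (real \<Rightarrow> 'g \<Rightarrow> real) \<Rightarrow> bool" where
  "liu_process \<Gamma> L M C \<longleftrightarrow>
     (\<forall>t\<ge>0. uncertain_variable \<Gamma> L (C t)) \<and>
     (\<forall>\<gamma>\<in>\<Gamma>. C 0 \<gamma> = 0) \<and>
     (\<exists>A\<in>L. M A = 1 \<and> (\<forall>\<gamma>\<in>A. \<exists>K. \<forall>s\<ge>0. \<forall>t\<ge>0. \<bar>C s \<gamma> - C t \<gamma>\<bar> \<le> K * \<bar>s - t\<bar>)) \<and>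
     (\<forall>t>0. \<forall>s1\<ge>0. \<forall>s2\<ge>0. \<forall>x.
        unc_dist \<Gamma> M (\<lambda>\<gamma>. C (s1 + t) \<gamma> - C s1 \<gamma>) x = unc_dist \<Gamma> M (\<lambda>\<gamma>. C (s2 + t) \<gamma> - C s2 \<gamma>) x) \<and>
     (\<forall>(\<tau>::nat \<Rightarrow> real) k. 0 \<le> \<tau> 0 \<and> (\<forall>i<k. \<tau> i < \<tau> (Suc i)) \<longrightarrow>
        unc_indep \<Gamma> M k (\<lambda>i \<gamma>. if i = 0 then C (\<tau> 0) \<gamma> else C (\<tau> i) \<gamma> - C (\<tau> (i - 1)) \<gamma>)) \<and>
     (\<forall>s\<ge>0. \<forall>t>0. normal_uncertain \<Gamma> L M (\<lambda>\<gamma>. C (s + t) \<gamma> - C s \<gamma>) 0 t)"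

definition is_partition :: "(nat \<Rightarrow> real) \<Rightarrow> nat \<Rightarrow> real \<Rightarrow> bool" where
  "is_partition p k a \<longleftrightarrow> p 0 = 0 \<and> p k = a \<and> (\<forall>i<k. p i < p (Suc i))"

definition liu_sum :: "(real \<Rightarrow> 'g \<Rightarrow> real) \<Rightarrow> (real \<Rightarrow> 'g \<Rightarrow> real) \<Rightarrow> (nat \<Rightarrow> real) \<Rightarrow> nat \<Rightarrow> 'g \<Rightarrow> real" where
  "liu_sum Z C p k \<gamma> = (\<Sum>i<k. Z (p i) \<gamma> * (C (p (Suc i)) \<gamma> - C (p i) \<gamma>))"

definition liu_conv :: "(real \<Rightarrow> 'g \<Rightarrow> real) \<Rightarrow> (real \<Rightarrow> 'g \<Rightarrow> real) \<Rightarrow> real \<Rightarrow> 'g \<Rightarrow> real \<Rightarrow> bool" where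
  "liu_conv Z C a \<gamma> I \<longleftrightarrow>
     (\<forall>\<epsilon>>0. \<exists>\<delta>>0. \<forall>p k. is_partition p k a \<and> (\<forall>i<k. p (Suc i) - p i < \<delta>) \<longrightarrow>
        \<bar>liu_sum Z C p k \<gamma> - I\<bar> < \<epsilon>)"

definition liu_integrable :: "'g set set \<Rightarrow> ('g set \<Rightarrow> real) \<Rightarrow> (real \<Rightarrow> 'g \<Rightarrow> real) \<Rightarrow> (real \<Rightarrow> 'g \<Rightarrow> real) \<Rightarrow> real \<Rightarrow> bool" where
  "liu_integrable L M Z C a \<longleftrightarrow> (\<exists>A\<in>L. M A = 1 \<and> (\<forall>\<gamma>\<in>A. \<exists>I. liu_conv Z C a \<gamma> I))"

definition liu_int :: "(real \<Rightarrow> 'g \<Rightarrow> real) \<Rightarrow> (real \<Rightarrow> 'g \<Rightarrow> real) \<Rightarrow> real \<Rightarrow> 'g \<Rightarrow> real" where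
  "liu_int Z C a \<gamma> = (THE I. liu_conv Z C a \<gamma> I)"

text \<open>Continuity of f : [0,oo) x R^n -> R, with x in R^n represented by
  (x 0, ..., x (n-1)) of a function nat => real (this forces independence of x i for i >= n).\<close>
definition cont_Rn :: "nat \<Rightarrow> (real \<Rightarrow> (nat \<Rightarrow> real) \<Rightarrow> real) \<Rightarrow> bool" where
  "cont_Rn n f \<longleftrightarrow>
     (\<forall>t\<ge>0. \<forall>x. \<forall>\<epsilon>>0. \<exists>\<delta>>0. \<forall>t'\<ge>0. \<forall>x'.
        \<bar>t' - t\<bar> < \<delta> \<and> (\<forall>i<n. \<bar>x' i - x i\<bar> < \<delta>) \<longrightarrow> \<bar>f t' x' - f t x\<bar> < \<epsilon>)"

fun iter_int :: "nat \<Rightarrow> (real \<Rightarrow> real) \<Rightarrow> real \<Rightarrow> real" where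
  "iter_int 0 h t = h t"
| "iter_int (Suc m) h t = integral {0..t} (\<lambda>s. iter_int m h s)"

text \<open>X (with derivatives D 0 = X, D 1, ..., D (n-1)) solves the n-th order uncertain
  differential equation with initial values x0 0, ..., x0 (n-1): X is an uncertain process,
  the derivatives exist (one-sided at 0), the initial conditions hold, the inner Liu integrals
  exist (almost surely), and for every t >= 0 the integral equation holds almost surely, on
  sample points where all integrals in it exist.\<close>
definition is_solution ::
  "'g set \<Rightarrow> 'g set set \<Rightarrow> ('g set \<Rightarrow> real) \<Rightarrow> (real \<Rightarrow> 'g \<Rightarrow> real) \<Rightarrow> nat \<Rightarrow>
   (real \<Rightarrow> (nat \<Rightarrow> real) \<Rightarrow> real) \<Rightarrow> (real \<Rightarrow> (nat \<Rightarrow> real) \<Rightarrow> real) \<Rightarrow>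
   (nat \<Rightarrow> real) \<Rightarrow> (nat \<Rightarrow> real \<Rightarrow> 'g \<Rightarrow> real) \<Rightarrow> bool" where
  "is_solution \<Gamma> L M C n f g x0 D \<longleftrightarrow>
     (\<forall>t\<ge>0. uncertain_variable \<Gamma> L (D 0 t)) \<and>
     (\<forall>k. Suc k < n \<longrightarrow> (\<forall>\<gamma>\<in>\<Gamma>. \<forall>t\<ge>0.
         ((\<lambda>s. D k s \<gamma>) has_real_derivative D (Suc k) t \<gamma>) (at t within {0..}))) \<and>
     (\<forall>k<n. \<forall>\<gamma>\<in>\<Gamma>. D k 0 \<gamma> = x0 k) \<and>
     (\<forall>a\<ge>0. liu_integrable L M (\<lambda>s \<gamma>. g s (\<lambda>i. D i s \<gamma>)) C a) \<and>
     (\<forall>t\<ge>0. \<exists>A\<in>L. M A = 1 \<and> (\<forall>\<gamma>\<in>A.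
        (\<forall>a\<in>{0..t}. \<exists>I. liu_conv (\<lambda>s \<gamma>. g s (\<lambda>i. D i s \<gamma>)) C a \<gamma> I) \<and>
        (\<forall>m<n. \<forall>a\<in>{0..t}. (\<lambda>u. iter_int m (\<lambda>s. f s (\<lambda>i. D i s \<gamma>)) u) integrable_on {0..a}) \<and>
        (\<forall>m. Suc m < n \<longrightarrow> (\<forall>a\<in>{0..t}.
            (\<lambda>u. iter_int m (\<lambda>s. liu_int (\<lambda>s \<gamma>. g s (\<lambda>i. D i s \<gamma>)) C s \<gamma>) u) integrable_on {0..a})) \<and>
        D 0 t \<gamma> = (\<Sum>i<n. t ^ i / fact i * x0 i)
                   + iter_int n (\<lambda>s. f s (\<lambda>i. D i s \<gamma>)) t
                   + iter_int (n - 1) (\<lambda>s. liu_int (\<lambda>s \<gamma>. g s (\<lambda>i. D i s \<gamma>)) C s \<gamma>) t))"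

end

theory Submission
  imports Defs
begin

(* Fix a sample point at which the Liu process has Lipschitz (hence continuous) paths and the
  integral equation holds; the intersection of these two events still has uncertain measure one.
  There the Liu integral is a pathwise limit of left-point Riemann--Stieltjes sums, and its
  indefinite version F is continuous. Summation by parts against the smooth weight (t - s)^k gives
  that the Liu integral of (t - s)^k g is k times the integral of (t - s)^(k-1) F, i.e.
  k! times the k-fold iterated integral of F. The drift term is Cauchy's formula for repeated
  integration; since the integrand is only Henstock--Kurzweil integrable, its inductive step is an
  integration by parts against a C^1 weight, proved directly from the Henstock lemma. *)

section \<open>Riemann--Stieltjes sums along a sample path\<close>

definition fine_partition :: "real \<Rightarrow> (nat \<Rightarrow> real) \<Rightarrow> nat \<Rightarrow> real \<Rightarrow> bool" where
  "fine_partition \<delta> p k a \<longleftrightarrow> is_partition p k a \<and> (\<forall>i<k. p (Suc i) - p i < \<delta>)"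

definition rs_sum :: "(real \<Rightarrow> real) \<Rightarrow> (real \<Rightarrow> real) \<Rightarrow> (nat \<Rightarrow> real) \<Rightarrow> nat \<Rightarrow> real" where
  "rs_sum z c p k = (\<Sum>i<k. z (p i) * (c (p (Suc i)) - c (p i)))"

definition has_rs_integral :: "(real \<Rightarrow> real) \<Rightarrow> (real \<Rightarrow> real) \<Rightarrow> real \<Rightarrow> real \<Rightarrow> bool" where
  "has_rs_integral z c a I \<longleftrightarrow>
     (\<forall>\<epsilon>>0. \<exists>\<delta>>0. \<forall>p k. fine_partition \<delta> p k a \<longrightarrow> \<bar>rs_sum z c p k - I\<bar> < \<epsilon>)"

lemma liu_conv_iff_has_rs_integral:
  "liu_conv Z C a \<gamma> I \<longleftrightarrow> has_rs_integral (\<lambda>s. Z s \<gamma>) (\<lambda>s. C s \<gamma>) a I"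
  unfolding liu_conv_def has_rs_integral_def fine_partition_def liu_sum_def rs_sum_def by simp

lemma rs_sum_Suc: "rs_sum z c p (Suc k) = rs_sum z c p k + z (p k) * (c (p (Suc k)) - c (p k))"
  by (simp add: rs_sum_def)

lemma is_partition_mono:
  assumes "is_partition p k a" "i \<le> j" "j \<le> k"
  shows "p i \<le> p j"
  using assms(2,3)
proof (induction j)
  case (Suc j)
  show ?case
  proof (cases "i = Suc j")
    case False
    then have "p i \<le> p j" using Suc by simp
    also have "p j < p (Suc j)" using assms(1) Suc.prems unfolding is_partition_def by simp
    finally show ?thesis by simp
  qed simp
qed simp

lemma is_partition_bounds:
  assumes "is_partition p k a" "i \<le> k"
  shows "0 \<le> p i" "p i \<le> a"
  using is_partition_mono[OF assms(1), of 0 i] is_partition_mono[OF assms(1), of i k] assms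
  unfolding is_partition_def by auto

lemma is_partition_prefix:
  assumes "is_partition p k a" "j \<le> k"
  shows "is_partition p j (p j)"
  using assms unfolding is_partition_def by auto

lemma fine_partition_mono: "fine_partition \<delta> p k a \<Longrightarrow> \<delta> \<le> \<delta>' \<Longrightarrow> fine_partition \<delta>' p k a"
  unfolding fine_partition_def by force

lemma fine_partition_exists:
  assumes "0 \<le> a" "0 < \<delta>"
  obtains p k where "fine_partition \<delta> p k a"
proof (cases "a = 0")
  case True
  then have "fine_partition \<delta> (\<lambda>_. 0) 0 a" by (simp add: fine_partition_def is_partition_def)
  then show ?thesis by (rule that)
next
  case False
  then have a: "a > 0" using assms(1) by simp
  obtain N :: nat where N: "a / \<delta> < real N" using reals_Archimedean2 by blast
  have N_pos: "real N > 0" using N a assms(2) by (smt (verit) divide_pos_pos)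
  have step: "a * real (Suc i) / real N - a * real i / real N = a / real N" for i
    by (simp add: field_simps add_divide_distrib)
  have "a / real N < \<delta>" using N N_pos assms(2) by (simp add: field_simps)
  moreover have "a * real i / real N < a * real (Suc i) / real N" for i
    using step[of i] a N_pos by (smt (verit) divide_pos_pos)
  ultimately have "fine_partition \<delta> (\<lambda>i. a * real i / real N) N a"
    using N_pos step unfolding fine_partition_def is_partition_def by simp
  then show ?thesis by (rule that)
qed

lemma has_rs_integral_unique:
  assumes "0 \<le> a" "has_rs_integral z c a I" "has_rs_integral z c a J"
  shows "I = J"
proof (rule ccontr)
  assume "I \<noteq> J"
  then have e: "\<bar>I - J\<bar> / 2 > 0" by simp
  obtain \<delta>1 where "\<delta>1 > 0" and \<delta>1: "\<And>p k. fine_partition \<delta>1 p k a \<Longrightarrow> \<bar>rs_sum z c p k - I\<bar> < \<bar>I - J\<bar> / 2"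
    using assms(2) e unfolding has_rs_integral_def by blast
  obtain \<delta>2 where "\<delta>2 > 0" and \<delta>2: "\<And>p k. fine_partition \<delta>2 p k a \<Longrightarrow> \<bar>rs_sum z c p k - J\<bar> < \<bar>I - J\<bar> / 2"
    using assms(3) e unfolding has_rs_integral_def by blast
  obtain p k where "fine_partition (min \<delta>1 \<delta>2) p k a"
    using fine_partition_exists[OF assms(1)] \<open>\<delta>1 > 0\<close> \<open>\<delta>2 > 0\<close> by (metis min_less_iff_conj)
  then have "\<bar>rs_sum z c p k - I\<bar> < \<bar>I - J\<bar> / 2" "\<bar>rs_sum z c p k - J\<bar> < \<bar>I - J\<bar> / 2"
    using \<delta>1 \<delta>2 fine_partition_mono by (meson min.cobounded1 min.cobounded2)+
  then show False by (simp add: abs_if split: if_splits)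
qed

lemma liu_int_eqI:
  assumes "0 \<le> a" "liu_conv Z C a \<gamma> I"
  shows "liu_int Z C a \<gamma> = I"
  unfolding liu_int_def
proof (rule the_equality)
  show "liu_conv Z C a \<gamma> I" by fact
  show "J = I" if "liu_conv Z C a \<gamma> J" for J
    using has_rs_integral_unique[OF assms(1)] that assms(2) unfolding liu_conv_iff_has_rs_integral by blast
qed

lemma fine_partition_append:
  assumes q: "fine_partition \<delta> q m u" and r: "fine_partition \<delta> r N (t - u)"
  shows "fine_partition \<delta> (\<lambda>i. if i \<le> m then q i else u + r (i - m)) (m + N) t"
proof -
  define P where "P i = (if i \<le> m then q i else u + r (i - m))" for i
  have q_ends: "q 0 = 0" "q m = u" and r_ends: "r 0 = 0" "r N = t - u"
    using q r unfolding fine_partition_def is_partition_def by auto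
  have P_tail: "P (m + j) = u + r j" for j
    using q_ends r_ends by (cases j) (auto simp: P_def)
  have "P i < P (Suc i) \<and> P (Suc i) - P i < \<delta>" if i: "i < m + N" for i
  proof (cases "Suc i \<le> m")
    case True
    then show ?thesis using q unfolding fine_partition_def is_partition_def P_def by auto
  next
    case False
    then obtain j where "i = m + j" "j < N" using i by (metis add_less_imp_less_left le_Suc_ex not_less_eq_eq)
    then show ?thesis
      using P_tail[of j] P_tail[of "Suc j"] r unfolding fine_partition_def is_partition_def by auto
  qed
  moreover have "P 0 = 0" "P (m + N) = t" using q_ends P_tail[of N] r_ends by (auto simp: P_def)
  ultimately show ?thesis unfolding fine_partition_def is_partition_def P_def[symmetric] by simp
qed

lemma rs_sum_append:
  assumes "q m = u" "r 0 = 0"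
  shows "rs_sum z c (\<lambda>i. if i \<le> m then q i else u + r (i - m)) (m + N)
       = rs_sum z c q m + rs_sum (\<lambda>s. z (u + s)) (\<lambda>s. c (u + s)) r N"
proof (induction N)
  case 0
  show ?case by (simp add: rs_sum_def)
next
  case (Suc N)
  have "(if m + N \<le> m then q (m + N) else u + r (m + N - m)) = u + r N"
    using assms by (cases N) auto
  then show ?case using Suc by (simp add: rs_sum_Suc)
qed

lemma has_rs_integral_uniform:
  assumes "0 \<le> t" and conv: "\<forall>a\<in>{0..t}. has_rs_integral z c a (F a)" and "e > 0"
  obtains \<delta> where "\<delta> > 0"
    "\<And>u p m. u \<in> {0..t} \<Longrightarrow> fine_partition \<delta> p m u \<Longrightarrow> \<bar>rs_sum z c p m - F u\<bar> < e"
proof -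
  obtain \<delta> where "\<delta> > 0" and \<delta>: "\<And>p k. fine_partition \<delta> p k t \<Longrightarrow> \<bar>rs_sum z c p k - F t\<bar> < e / 3"
    using conv \<open>0 \<le> t\<close> \<open>e > 0\<close> unfolding has_rs_integral_def
    by (metis atLeastAtMost_iff divide_pos_pos order_refl zero_less_numeral)
  have "\<bar>rs_sum z c p m - F u\<bar> < e" if u: "u \<in> {0..t}" and p: "fine_partition \<delta> p m u" for u p m
  proof -
    \<comment> \<open>Any two fine partitions of [0,u], extended by the same fine partition of [u,t],
      have Riemann--Stieltjes sums within e/3 of F t; so they lie within 2e/3 of each other.\<close>
    obtain r N where r: "fine_partition \<delta> r N (t - u)"
      using fine_partition_exists[of "t - u" \<delta>] u \<open>\<delta> > 0\<close> by auto
    define T where "T = rs_sum (\<lambda>s. z (u + s)) (\<lambda>s. c (u + s)) r N"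
    have extended: "\<bar>rs_sum z c q k + T - F t\<bar> < e / 3" if q: "fine_partition \<delta> q k u" for q k
    proof -
      have "q k = u" "r 0 = 0" using q r unfolding fine_partition_def is_partition_def by auto
      then show ?thesis
        using \<delta>[OF fine_partition_append[OF q r]] rs_sum_append[of q k u r z c N] unfolding T_def by simp
    qed
    obtain \<delta>' where "\<delta>' > 0" and \<delta>': "\<And>q k. fine_partition \<delta>' q k u \<Longrightarrow> \<bar>rs_sum z c q k - F u\<bar> < e / 3"
      using conv u \<open>e > 0\<close> unfolding has_rs_integral_def by (metis divide_pos_pos zero_less_numeral)
    obtain q k where q: "fine_partition (min \<delta> \<delta>') q k u"
      using fine_partition_exists[of u "min \<delta> \<delta>'"] u \<open>\<delta> > 0\<close> \<open>\<delta>' > 0\<close> by auto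
    have "\<bar>rs_sum z c q k - F u\<bar> < e / 3" "\<bar>rs_sum z c q k + T - F t\<bar> < e / 3"
      using \<delta>' extended q fine_partition_mono by (meson min.cobounded1 min.cobounded2)+
    moreover have "\<bar>rs_sum z c p m + T - F t\<bar> < e / 3" using extended p by blast
    ultimately show ?thesis by (simp add: abs_if split: if_splits)
  qed
  then show ?thesis using \<open>\<delta> > 0\<close> that by blast
qed

lemma rs_integral_increment:
  assumes "e > 0" "\<delta> > 0"
    and \<delta>: "\<And>u p m. u \<in> {0..t} \<Longrightarrow> fine_partition \<delta> p m u \<Longrightarrow> \<bar>rs_sum z c p m - F u\<bar> < e"
    and uv: "0 \<le> u" "u \<le> v" "v \<le> t" "v - u < \<delta>"
  shows "\<bar>F v - F u - z u * (c v - c u)\<bar> < 2 * e"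
proof (cases "u = v")
  case True
  then show ?thesis using \<open>e > 0\<close> by simp
next
  case False
  obtain q k where q: "fine_partition \<delta> q k u"
    using fine_partition_exists[of u \<delta>] uv \<open>\<delta> > 0\<close> by auto
  have r: "fine_partition \<delta> (\<lambda>i. real i * (v - u)) 1 (v - u)"
    using uv False unfolding fine_partition_def is_partition_def by auto
  have "q k = u" using q unfolding fine_partition_def is_partition_def by simp
  then have "rs_sum z c (\<lambda>i. if i \<le> k then q i else u + real (i - k) * (v - u)) (k + 1)
      = rs_sum z c q k + z u * (c v - c u)"
    using rs_sum_append[of q k u "\<lambda>i. real i * (v - u)" z c 1] by (simp add: rs_sum_def)
  moreover have "\<bar>rs_sum z c (\<lambda>i. if i \<le> k then q i else u + real (i - k) * (v - u)) (k + 1) - F v\<bar> < e"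
    using \<delta> fine_partition_append[OF q r] uv by auto
  moreover have "\<bar>rs_sum z c q k - F u\<bar> < e" using \<delta> q uv by auto
  ultimately show ?thesis by (simp add: abs_if split: if_splits)
qed

lemma continuous_on_rs_integral:
  assumes "0 \<le> t" and conv: "\<forall>a\<in>{0..t}. has_rs_integral z c a (F a)"
    and c_cont: "continuous_on {0..t} c"
  shows "continuous_on {0..t} F"
  unfolding continuous_on_iff
proof (intro ballI allI impI)
  fix x \<epsilon> :: real
  assume x: "x \<in> {0..t}" and "\<epsilon> > 0"
  obtain \<delta> where "\<delta> > 0"
    and \<delta>: "\<And>u p m. u \<in> {0..t} \<Longrightarrow> fine_partition \<delta> p m u \<Longrightarrow> \<bar>rs_sum z c p m - F u\<bar> < \<epsilon> / 8"
    using has_rs_integral_uniform[OF \<open>0 \<le> t\<close> conv, of "\<epsilon> / 8"] \<open>\<epsilon> > 0\<close> by auto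
  \<comment> \<open>One anchor u below x serves both sides of x, so only the single value z u enters.\<close>
  define u where "u = max 0 (x - \<delta> / 2)"
  define K where "K = \<bar>z u\<bar> + 1"
  have "K > 0" by (simp add: K_def)
  obtain d where "d > 0" and d: "\<And>y. y \<in> {0..t} \<Longrightarrow> dist y x < d \<Longrightarrow> \<bar>c y - c x\<bar> < \<epsilon> / (2 * K)"
    using c_cont x \<open>\<epsilon> > 0\<close> \<open>K > 0\<close> unfolding continuous_on_iff dist_real_def
    by (metis divide_pos_pos mult_pos_pos zero_less_numeral)
  have "\<bar>F y - F x\<bar> < \<epsilon>" if y: "y \<in> {0..t}" "dist y x < min d (\<delta> / 2)" for y
  proof -
    have "x - \<delta> / 2 < y" "y < x + \<delta> / 2" using y(2) unfolding dist_real_def by linarith+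
    then have u: "0 \<le> u" "u \<le> x" "u \<le> y" "x - u < \<delta>" "y - u < \<delta>"
      using x y \<open>\<delta> > 0\<close> unfolding u_def by auto
    have "\<bar>F y - F u - z u * (c y - c u)\<bar> < \<epsilon> / 4" "\<bar>F x - F u - z u * (c x - c u)\<bar> < \<epsilon> / 4"
      using rs_integral_increment[of "\<epsilon> / 8" \<delta> t z c F u, OF _ \<open>\<delta> > 0\<close> \<delta>] \<open>\<epsilon> > 0\<close> u x y by auto
    moreover have "\<bar>z u * (c y - c x)\<bar> \<le> K * \<bar>c y - c x\<bar>"
      unfolding abs_mult K_def by (simp add: mult_right_mono)
    moreover have "K * \<bar>c y - c x\<bar> < \<epsilon> / 2"
      using d[OF y(1)] y(2) \<open>K > 0\<close> by (simp add: field_simps)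
    ultimately show ?thesis by (simp add: abs_if algebra_simps split: if_splits)
  qed
  then show "\<exists>d>0. \<forall>y\<in>{0..t}. dist y x < d \<longrightarrow> dist (F y) (F x) < \<epsilon>"
    using \<open>d > 0\<close> \<open>\<delta> > 0\<close> by (metis dist_real_def half_gt_zero min_less_iff_conj)
qed

section \<open>Integration by parts against a smooth weight\<close>

lemma weighted_increment_bound:
  fixes \<phi> \<phi>' G F :: "real \<Rightarrow> real"
  assumes "a \<le> b" "{a..b} \<subseteq> S"
    and \<phi>: "\<forall>s\<in>S. (\<phi> has_real_derivative \<phi>' s) (at s within S)"
    and G: "\<forall>s\<in>S. (G has_real_derivative \<phi>' s * F s) (at s within S)"
    and B: "\<forall>s\<in>S. \<bar>\<phi>' s\<bar> \<le> B"
    and w: "\<forall>s\<in>{a..b}. \<bar>K - F s\<bar> \<le> w"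
  shows "\<bar>(\<phi> b - \<phi> a) * K - (G b - G a)\<bar> \<le> B * w * (b - a)"
proof -
  have "norm ((\<lambda>s. \<phi> s * K - G s) b - (\<lambda>s. \<phi> s * K - G s) a) \<le> (B * w) * norm (b - a)"
  proof (rule field_differentiable_bound[where S="{a..b}" and f'="\<lambda>s. \<phi>' s * (K - F s)"])
    show "convex {a..b}" "a \<in> {a..b}" "b \<in> {a..b}" using \<open>a \<le> b\<close> by auto
    fix s assume s: "s \<in> {a..b}"
    then have "s \<in> S" using assms(2) by auto
    have "((\<lambda>s. \<phi> s * K - G s) has_real_derivative \<phi>' s * K - \<phi>' s * F s) (at s within S)"
      using \<phi> G \<open>s \<in> S\<close> by (auto intro!: derivative_eq_intros)
    then have "((\<lambda>s. \<phi> s * K - G s) has_real_derivative \<phi>' s * (K - F s)) (at s within S)"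
      by (simp add: right_diff_distrib)
    then show "((\<lambda>s. \<phi> s * K - G s) has_field_derivative \<phi>' s * (K - F s)) (at s within {a..b})"
      using assms(2) by (rule DERIV_subset)
    show "norm (\<phi>' s * (K - F s)) \<le> B * w"
      unfolding real_norm_def abs_mult using B w s \<open>s \<in> S\<close> by (intro mult_mono) auto
  qed
  then show ?thesis using \<open>a \<le> b\<close> by (simp add: algebra_simps)
qed

lemma rs_sum_mult_by_parts:
  "rs_sum (\<lambda>s. \<phi> s * z s) c p k
     = \<phi> (p k) * rs_sum z c p k - (\<Sum>j<k. (\<phi> (p (Suc j)) - \<phi> (p j)) * rs_sum z c p (Suc j))"
proof (induction k)
  case (Suc k)
  show ?case
    unfolding rs_sum_Suc[of "\<lambda>s. \<phi> s * z s"] Suc sum.lessThan_Suc rs_sum_Suc[of z]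
    by (simp add: ring_distribs)
qed (simp add: rs_sum_def)

lemma rs_sum_mult_estimate:
  fixes \<phi> \<phi>' z c F G :: "real \<Rightarrow> real"
  assumes part: "is_partition p k t"
    and \<phi>: "\<forall>s\<in>{0..t}. (\<phi> has_real_derivative \<phi>' s) (at s within {0..t})"
    and G: "\<forall>s\<in>{0..t}. (G has_real_derivative \<phi>' s * F s) (at s within {0..t})"
    and B: "\<forall>s\<in>{0..t}. \<bar>\<phi>' s\<bar> \<le> B"
    and osc: "\<And>j s. j < k \<Longrightarrow> s \<in> {p j..p (Suc j)} \<Longrightarrow> \<bar>rs_sum z c p (Suc j) - F s\<bar> \<le> w"
  shows "\<bar>rs_sum (\<lambda>s. \<phi> s * z s) c p k - (\<phi> t * F t - (G t - G 0))\<bar>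
      \<le> \<bar>\<phi> t\<bar> * \<bar>rs_sum z c p k - F t\<bar> + B * w * t"
proof -
  have ends: "p 0 = 0" "p k = t" using part unfolding is_partition_def by auto
  note p_bounds = is_partition_bounds[OF part]
  \<comment> \<open>After summation by parts, the j-th term compares the partial sum up to p (j+1),
    which is close to F on [p j, p (j+1)], with the increment of G.\<close>
  define E where "E j = (\<phi> (p (Suc j)) - \<phi> (p j)) * rs_sum z c p (Suc j) - (G (p (Suc j)) - G (p j))" for j
  have "G t - G 0 = (\<Sum>j<k. G (p (Suc j)) - G (p j))"
    using sum_lessThan_telescope[of "\<lambda>j. G (p j)" k] ends by simp
  then have decomp: "rs_sum (\<lambda>s. \<phi> s * z s) c p k - (\<phi> t * F t - (G t - G 0))
      = \<phi> t * (rs_sum z c p k - F t) - (\<Sum>j<k. E j)"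
    unfolding rs_sum_mult_by_parts ends(2) E_def sum_subtractf by (simp add: algebra_simps)
  have "\<bar>E j\<bar> \<le> B * w * (p (Suc j) - p j)" if "j < k" for j
    unfolding E_def
  proof (rule weighted_increment_bound[OF _ _ \<phi> G B])
    show "p j \<le> p (Suc j)" "{p j..p (Suc j)} \<subseteq> {0..t}"
      using part that p_bounds[of j] p_bounds[of "Suc j"] unfolding is_partition_def by auto
    show "\<forall>s\<in>{p j..p (Suc j)}. \<bar>rs_sum z c p (Suc j) - F s\<bar> \<le> w"
      using osc that by blast
  qed
  then have "\<bar>\<Sum>j<k. E j\<bar> \<le> (\<Sum>j<k. B * w * (p (Suc j) - p j))"
    by (intro order_trans[OF sum_abs] sum_mono) auto
  also have "\<dots> = B * w * t"
    by (simp add: sum_distrib_left[symmetric] sum_lessThan_telescope ends)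
  finally show ?thesis
    unfolding decomp abs_mult[symmetric] by (smt (verit) abs_triangle_ineq4)
qed

lemma has_rs_integral_mult_by_parts:
  fixes \<phi> \<phi>' z c F :: "real \<Rightarrow> real"
  assumes "0 \<le> t" and conv: "\<forall>a\<in>{0..t}. has_rs_integral z c a (F a)"
    and c_cont: "continuous_on {0..t} c"
    and \<phi>: "\<forall>s\<in>{0..t}. (\<phi> has_real_derivative \<phi>' s) (at s within {0..t})"
    and \<phi>'_cont: "continuous_on {0..t} \<phi>'"
  shows "has_rs_integral (\<lambda>s. \<phi> s * z s) c t (\<phi> t * F t - integral {0..t} (\<lambda>s. \<phi>' s * F s))"
  unfolding has_rs_integral_def
proof (intro allI impI)
  fix \<epsilon> :: real
  assume "\<epsilon> > 0"
  have F_cont: "continuous_on {0..t} F" by (rule continuous_on_rs_integral[OF \<open>0 \<le> t\<close> conv c_cont])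
  define G where "G x = integral {0..x} (\<lambda>s. \<phi>' s * F s)" for x
  have G: "\<forall>s\<in>{0..t}. (G has_real_derivative \<phi>' s * F s) (at s within {0..t})"
    unfolding G_def using \<phi>'_cont F_cont by (auto intro!: integral_has_real_derivative continuous_on_mult)
  obtain B where "B \<ge> 0" and B: "\<forall>s\<in>{0..t}. \<bar>\<phi>' s\<bar> \<le> B"
    using continuous_on_compact_bound[OF compact_Icc \<phi>'_cont] by (metis real_norm_def)
  define \<eta> where "\<eta> = \<epsilon> / (2 * (1 + \<bar>\<phi> t\<bar> + B * t))"
  have "B * t \<ge> 0" using \<open>B \<ge> 0\<close> \<open>0 \<le> t\<close> by simp
  then have "\<eta> > 0" unfolding \<eta>_def using \<open>\<epsilon> > 0\<close> by (intro divide_pos_pos) auto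
  obtain \<delta>1 where "\<delta>1 > 0"
    and \<delta>1: "\<And>u p m. u \<in> {0..t} \<Longrightarrow> fine_partition \<delta>1 p m u \<Longrightarrow> \<bar>rs_sum z c p m - F u\<bar> < \<eta>"
    using has_rs_integral_uniform[OF \<open>0 \<le> t\<close> conv \<open>\<eta> > 0\<close>] by blast
  obtain \<delta>2 where "\<delta>2 > 0" and \<delta>2: "\<forall>x\<in>{0..t}. \<forall>x'\<in>{0..t}. dist x' x < \<delta>2 \<longrightarrow> dist (F x') (F x) < \<eta>"
    using compact_uniformly_continuous[OF F_cont compact_Icc] \<open>\<eta> > 0\<close>
    unfolding uniformly_continuous_on_def by blast
  have "\<bar>rs_sum (\<lambda>s. \<phi> s * z s) c p k - (\<phi> t * F t - (G t - G 0))\<bar> < \<epsilon>"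
    if p: "fine_partition (min \<delta>1 \<delta>2) p k t" for p k
  proof -
    have part: "is_partition p k t" and mesh: "\<forall>i<k. p (Suc i) - p i < min \<delta>1 \<delta>2"
      using p unfolding fine_partition_def by auto
    note p_bounds = is_partition_bounds[OF part]
    have "\<bar>rs_sum z c p (Suc j) - F s\<bar> \<le> 2 * \<eta>" if "j < k" "s \<in> {p j..p (Suc j)}" for j s
    proof -
      have "\<bar>rs_sum z c p (Suc j) - F (p (Suc j))\<bar> < \<eta>"
        using \<delta>1[of "p (Suc j)" p "Suc j"] is_partition_prefix[OF part, of "Suc j"] mesh that
          p_bounds[of "Suc j"] unfolding fine_partition_def by auto
      moreover have "\<bar>F s - F (p (Suc j))\<bar> < \<eta>"
        using \<delta>2 that mesh p_bounds[of j] p_bounds[of "Suc j"] by (auto simp: dist_real_def)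
      ultimately show ?thesis by linarith
    qed
    then have "\<bar>rs_sum (\<lambda>s. \<phi> s * z s) c p k - (\<phi> t * F t - (G t - G 0))\<bar>
        \<le> \<bar>\<phi> t\<bar> * \<bar>rs_sum z c p k - F t\<bar> + B * (2 * \<eta>) * t"
      by (rule rs_sum_mult_estimate[OF part \<phi> G B])
    also have "\<dots> \<le> \<bar>\<phi> t\<bar> * \<eta> + B * (2 * \<eta>) * t"
      using \<delta>1[of t p k] p \<open>0 \<le> t\<close> fine_partition_mono[OF p, of \<delta>1]
      by (intro add_right_mono mult_left_mono) auto
    also have "\<dots> = (\<bar>\<phi> t\<bar> + 2 * (B * t)) * \<eta>" by (simp add: algebra_simps)
    also have "\<dots> < \<epsilon>"
      unfolding \<eta>_def using \<open>\<epsilon> > 0\<close> \<open>B * t \<ge> 0\<close>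
      by (simp add: field_simps) (smt (verit) abs_ge_zero mult_nonneg_nonneg)
    finally show ?thesis .
  qed
  moreover have "G t - G 0 = integral {0..t} (\<lambda>s. \<phi>' s * F s)" by (simp add: G_def)
  ultimately show "\<exists>\<delta>>0. \<forall>p k. fine_partition \<delta> p k t \<longrightarrow>
      \<bar>rs_sum (\<lambda>s. \<phi> s * z s) c p k - (\<phi> t * F t - integral {0..t} (\<lambda>s. \<phi>' s * F s))\<bar> < \<epsilon>"
    using \<open>\<delta>1 > 0\<close> \<open>\<delta>2 > 0\<close> by (metis min_less_iff_conj)
qed

lemma tagged_increment_bound:
  fixes \<phi> \<phi>' G H :: "real \<Rightarrow> real"
  assumes \<phi>: "\<forall>s\<in>S. (\<phi> has_real_derivative \<phi>' s) (at s within S)"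
    and G: "\<forall>s\<in>S. (G has_real_derivative \<phi>' s * H s) (at s within S)"
    and B: "\<forall>s\<in>S. \<bar>\<phi>' s\<bar> \<le> B"
    and "u \<le> x" "x \<le> v" "{u..v} \<subseteq> S"
    and osc: "\<forall>s\<in>{u..v}. \<bar>H u - H s\<bar> \<le> w \<and> \<bar>H v - H s\<bar> \<le> w"
  shows "\<bar>\<phi> x * (H v - H u) - ((\<phi> v * H v - G v) - (\<phi> u * H u - G u))\<bar> \<le> B * w * (v - u)"
proof -
  let ?right = "(\<phi> v - \<phi> x) * H v - (G v - G x)" and ?left = "(\<phi> x - \<phi> u) * H u - (G x - G u)"
  have "\<bar>?right\<bar> \<le> B * w * (v - x)"
    using osc assms(4-6) by (intro weighted_increment_bound[OF _ _ \<phi> G B]) auto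
  moreover have "\<bar>?left\<bar> \<le> B * w * (x - u)"
    using osc assms(4-6) by (intro weighted_increment_bound[OF _ _ \<phi> G B]) auto
  moreover have "\<phi> x * (H v - H u) - ((\<phi> v * H v - G v) - (\<phi> u * H u - G u)) = - (?right + ?left)"
    by (simp add: algebra_simps)
  moreover have "B * w * (v - x) + B * w * (x - u) = B * w * (v - u)"
    by (simp add: algebra_simps)
  ultimately show ?thesis
    using abs_triangle_ineq[of ?right ?left] abs_minus_cancel[of "?right + ?left"] by linarith
qed

lemma has_integral_tagged_increments:
  fixes f \<Phi> :: "real \<Rightarrow> real"
  assumes "a \<le> b"
    and approx: "\<And>e. e > 0 \<Longrightarrow> \<exists>\<gamma>. gauge \<gamma> \<and> (\<forall>\<D>. \<D> tagged_division_of {a..b} \<and> \<gamma> fine \<D> \<longrightarrow>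
        (\<Sum>(x, K)\<in>\<D>. \<bar>measure lborel K * f x - (\<Phi> (Sup K) - \<Phi> (Inf K))\<bar>) < e)"
  shows "(f has_integral (\<Phi> b - \<Phi> a)) {a..b}"
  unfolding has_integral_real
proof (intro allI impI)
  fix e :: real
  assume "e > 0"
  from approx[OF this] obtain \<gamma> where "gauge \<gamma>" and \<gamma>: "\<forall>\<D>. \<D> tagged_division_of {a..b} \<and> \<gamma> fine \<D> \<longrightarrow>
      (\<Sum>(x, K)\<in>\<D>. \<bar>measure lborel K * f x - (\<Phi> (Sup K) - \<Phi> (Inf K))\<bar>) < e"
    by (elim exE conjE)
  have "norm ((\<Sum>(x, K)\<in>\<D>. measure lborel K *\<^sub>R f x) - (\<Phi> b - \<Phi> a)) < e"
    if "\<D> tagged_division_of {a..b}" "\<gamma> fine \<D>" for \<D>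
  proof -
    have "(\<Sum>(x, K)\<in>\<D>. measure lborel K *\<^sub>R f x) - (\<Phi> b - \<Phi> a)
        = (\<Sum>(x, K)\<in>\<D>. measure lborel K * f x - (\<Phi> (Sup K) - \<Phi> (Inf K)))"
      unfolding additive_tagged_division_1[OF \<open>a \<le> b\<close> that(1), of \<Phi>, symmetric]
      by (simp only: case_prod_unfold sum_subtractf real_scaleR_def)
    also have "\<bar>\<dots>\<bar> \<le> (\<Sum>(x, K)\<in>\<D>. \<bar>measure lborel K * f x - (\<Phi> (Sup K) - \<Phi> (Inf K))\<bar>)"
      unfolding case_prod_unfold by (rule sum_abs)
    also have "\<dots> < e" using \<gamma> that by blast
    finally show ?thesis by simp
  qed
  then show "\<exists>\<gamma>. gauge \<gamma> \<and> (\<forall>\<D>. \<D> tagged_division_of {a..b} \<and> \<gamma> fine \<D> \<longrightarrow>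
      norm ((\<Sum>(x, K)\<in>\<D>. measure lborel K *\<^sub>R f x) - (\<Phi> b - \<Phi> a)) < e)"
    using \<open>gauge \<gamma>\<close> by blast
qed

lemma tag_mult_estimate:
  fixes h \<phi> \<phi>' G H :: "real \<Rightarrow> real"
  assumes \<phi>: "\<forall>s\<in>{0..t}. (\<phi> has_real_derivative \<phi>' s) (at s within {0..t})"
    and G: "\<forall>s\<in>{0..t}. (G has_real_derivative \<phi>' s * H s) (at s within {0..t})"
    and B: "\<forall>s\<in>{0..t}. \<bar>\<phi>' s\<bar> \<le> B" and P: "\<forall>s\<in>{0..t}. \<bar>\<phi> s\<bar> \<le> P"
    and H: "\<And>u v. 0 \<le> u \<Longrightarrow> u \<le> v \<Longrightarrow> v \<le> t \<Longrightarrow> integral {u..v} h = H v - H u"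
    and osc: "\<And>s s'. s \<in> {0..t} \<Longrightarrow> s' \<in> {0..t} \<Longrightarrow> dist s s' < \<delta> \<Longrightarrow> \<bar>H s - H s'\<bar> \<le> w"
    and tag: "(x, K) \<in> \<D>" "\<D> tagged_division_of {0..t}" "(\<lambda>x. ball x (\<delta> / 2)) fine \<D>"
  shows "\<bar>measure lborel K * (\<phi> x * h x)
           - ((\<phi> (Sup K) * H (Sup K) - G (Sup K)) - (\<phi> (Inf K) * H (Inf K) - G (Inf K)))\<bar>
      \<le> P * \<bar>measure lborel K * h x - integral K h\<bar> + B * w * measure lborel K"
proof -
  obtain u v where K: "K = cbox u v" using tagged_division_ofD(4)[OF tag(2) tag(1)] by blast
  moreover have "x \<in> K" "K \<subseteq> {0..t}" using tagged_division_ofD(2,3)[OF tag(2) tag(1)] by auto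
  moreover have "K \<subseteq> ball x (\<delta> / 2)" using fineD[OF tag(3) tag(1)] .
  ultimately have "u \<le> x" "x \<le> v" "0 \<le> u" "v \<le> t" "dist x u < \<delta> / 2" "dist x v < \<delta> / 2"
    by (auto simp: subset_eq)
  then have uv: "u \<le> x" "x \<le> v" "0 \<le> u" "v \<le> t" "v - u < \<delta>"
    by (auto simp: dist_real_def abs_less_iff)
  then have K_eq: "K = {u..v}" "Sup K = v" "Inf K = u" "measure lborel K = v - u"
    using K by auto
  have "\<forall>s\<in>{u..v}. \<bar>H u - H s\<bar> \<le> w \<and> \<bar>H v - H s\<bar> \<le> w"
    using osc uv by (auto simp: dist_real_def)
  then have "\<bar>\<phi> x * (H v - H u) - ((\<phi> v * H v - G v) - (\<phi> u * H u - G u))\<bar> \<le> B * w * (v - u)"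
    using uv by (intro tagged_increment_bound[OF \<phi> G B]) auto
  moreover have "\<bar>\<phi> x * ((v - u) * h x - integral K h)\<bar> \<le> P * \<bar>(v - u) * h x - integral K h\<bar>"
    unfolding abs_mult using P uv by (intro mult_right_mono) auto
  moreover have "(v - u) * (\<phi> x * h x) - ((\<phi> v * H v - G v) - (\<phi> u * H u - G u))
      = \<phi> x * ((v - u) * h x - integral K h) + (\<phi> x * (H v - H u) - ((\<phi> v * H v - G v) - (\<phi> u * H u - G u)))"
    unfolding K_eq(1) H[OF uv(3) order_trans[OF uv(1,2)] uv(4)] by (simp add: algebra_simps)
  ultimately show ?thesis
    unfolding K_eq(2-4) by (smt (verit) abs_triangle_ineq)
qed

lemma tagged_division_mult_estimate:
  fixes h \<phi> \<phi>' G H :: "real \<Rightarrow> real"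
  assumes "0 \<le> t"
    and \<phi>: "\<forall>s\<in>{0..t}. (\<phi> has_real_derivative \<phi>' s) (at s within {0..t})"
    and G: "\<forall>s\<in>{0..t}. (G has_real_derivative \<phi>' s * H s) (at s within {0..t})"
    and B: "\<forall>s\<in>{0..t}. \<bar>\<phi>' s\<bar> \<le> B" and P: "\<forall>s\<in>{0..t}. \<bar>\<phi> s\<bar> \<le> P"
    and H: "\<And>u v. 0 \<le> u \<Longrightarrow> u \<le> v \<Longrightarrow> v \<le> t \<Longrightarrow> integral {u..v} h = H v - H u"
    and osc: "\<And>s s'. s \<in> {0..t} \<Longrightarrow> s' \<in> {0..t} \<Longrightarrow> dist s s' < \<delta> \<Longrightarrow> \<bar>H s - H s'\<bar> \<le> w"
    and \<D>: "\<D> tagged_division_of {0..t}" "(\<lambda>x. ball x (\<delta> / 2)) fine \<D>"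
  defines "\<Phi> \<equiv> \<lambda>s. \<phi> s * H s - G s"
  shows "(\<Sum>(x, K)\<in>\<D>. \<bar>measure lborel K * (\<phi> x * h x) - (\<Phi> (Sup K) - \<Phi> (Inf K))\<bar>)
      \<le> P * (\<Sum>(x, K)\<in>\<D>. norm (measure lborel K *\<^sub>R h x - integral K h)) + B * w * t"
proof -
  have "(\<Sum>(x, K)\<in>\<D>. \<bar>measure lborel K * (\<phi> x * h x) - (\<Phi> (Sup K) - \<Phi> (Inf K))\<bar>)
      \<le> (\<Sum>(x, K)\<in>\<D>. P * \<bar>measure lborel K * h x - integral K h\<bar>
            + B * w * measure lborel K)"
    unfolding \<Phi>_def using tag_mult_estimate[OF \<phi> G B P H osc _ \<D>] by (intro sum_mono) auto
  also have "\<dots> = P * (\<Sum>(x, K)\<in>\<D>. norm (measure lborel K *\<^sub>R h x - integral K h))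
      + B * w * (\<Sum>(x, K)\<in>\<D>. measure lborel K)"
    by (simp add: sum.distrib sum_distrib_left case_prod_unfold)
  also have "(\<Sum>(x, K)\<in>\<D>. measure lborel K) = t"
    using additive_content_tagged_division[of \<D> 0 t] \<D>(1) \<open>0 \<le> t\<close> by simp
  finally show ?thesis .
qed

lemma has_integral_mult_by_parts:
  fixes h \<phi> \<phi>' :: "real \<Rightarrow> real"
  assumes "0 \<le> t" and h: "h integrable_on {0..t}"
    and \<phi>: "\<forall>s\<in>{0..t}. (\<phi> has_real_derivative \<phi>' s) (at s within {0..t})"
    and \<phi>'_cont: "continuous_on {0..t} \<phi>'"
  shows "((\<lambda>s. \<phi> s * h s) has_integral
           (\<phi> t * integral {0..t} h - integral {0..t} (\<lambda>s. \<phi>' s * integral {0..s} h))) {0..t}"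
proof -
  define H where "H x = integral {0..x} h" for x
  have H_cont: "continuous_on {0..t} H" unfolding H_def by (rule indefinite_integral_continuous_1[OF h])
  have H_diff: "integral {u..v} h = H v - H u" if "0 \<le> u" "u \<le> v" "v \<le> t" for u v
    unfolding H_def using Henstock_Kurzweil_Integration.integral_combine[of 0 u v h]
      integrable_on_subinterval[OF h, of 0 v] that by auto
  define G where "G x = integral {0..x} (\<lambda>s. \<phi>' s * H s)" for x
  have G: "\<forall>s\<in>{0..t}. (G has_real_derivative \<phi>' s * H s) (at s within {0..t})"
    unfolding G_def using \<phi>'_cont H_cont by (auto intro!: integral_has_real_derivative continuous_on_mult)
  \<comment> \<open>Phi would be a primitive of phi h if H' = h held everywhere; only its increments over
    the tags of a division are used.\<close>
  define \<Phi> where "\<Phi> x = \<phi> x * H x - G x" for x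
  have \<phi>_cont: "continuous_on {0..t} \<phi>"
    using \<phi> by (auto simp: continuous_on_eq_continuous_within intro: DERIV_continuous)
  obtain P where "P \<ge> 0" and P: "\<forall>s\<in>{0..t}. \<bar>\<phi> s\<bar> \<le> P"
    using continuous_on_compact_bound[OF compact_Icc \<phi>_cont] by (metis real_norm_def)
  obtain B where "B \<ge> 0" and B: "\<forall>s\<in>{0..t}. \<bar>\<phi>' s\<bar> \<le> B"
    using continuous_on_compact_bound[OF compact_Icc \<phi>'_cont] by (metis real_norm_def)
  have "((\<lambda>s. \<phi> s * h s) has_integral (\<Phi> t - \<Phi> 0)) {0..t}"
  proof (rule has_integral_tagged_increments[OF \<open>0 \<le> t\<close>])
    fix e :: real
    assume "e > 0"
    have "e / (2 * (P + 1)) > 0" using \<open>e > 0\<close> \<open>P \<ge> 0\<close> by simp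
    then obtain \<gamma> where "gauge \<gamma>" and \<gamma>: "\<And>\<D>. \<D> tagged_partial_division_of cbox 0 t \<Longrightarrow> \<gamma> fine \<D> \<Longrightarrow>
        (\<Sum>(x, K)\<in>\<D>. norm (measure lborel K *\<^sub>R h x - integral K h)) < e / (2 * (P + 1))"
      using Henstock_lemma[of h 0 t] h by (simp only: box_real(2)) blast
    define \<omega> where "\<omega> = e / (2 * (B * t + 1))"
    have "B * t \<ge> 0" using \<open>B \<ge> 0\<close> \<open>0 \<le> t\<close> by simp
    then have "\<omega> > 0" using \<open>e > 0\<close> by (simp add: \<omega>_def)
    then obtain \<delta> where "\<delta> > 0" and \<delta>: "\<forall>x\<in>{0..t}. \<forall>x'\<in>{0..t}. dist x' x < \<delta> \<longrightarrow> dist (H x') (H x) < \<omega>"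
      using compact_uniformly_continuous[OF H_cont compact_Icc] unfolding uniformly_continuous_on_def by blast
    have osc: "\<bar>H s - H s'\<bar> \<le> \<omega>" if "s \<in> {0..t}" "s' \<in> {0..t}" "dist s s' < \<delta>" for s s'
      using \<delta> that by (simp add: dist_real_def less_imp_le)
    show "\<exists>\<gamma>. gauge \<gamma> \<and> (\<forall>\<D>. \<D> tagged_division_of {0..t} \<and> \<gamma> fine \<D> \<longrightarrow>
        (\<Sum>(x, K)\<in>\<D>. \<bar>measure lborel K * (\<phi> x * h x) - (\<Phi> (Sup K) - \<Phi> (Inf K))\<bar>) < e)"
    proof (intro exI[of _ "\<lambda>x. \<gamma> x \<inter> ball x (\<delta> / 2)"] conjI allI impI)
      show "gauge (\<lambda>x. \<gamma> x \<inter> ball x (\<delta> / 2))"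
        using \<open>gauge \<gamma>\<close> \<open>\<delta> > 0\<close> by (auto intro!: gauge_Int gauge_ball_dependent)
      fix \<D>
      assume "\<D> tagged_division_of {0..t} \<and> (\<lambda>x. \<gamma> x \<inter> ball x (\<delta> / 2)) fine \<D>"
      then have \<D>: "\<D> tagged_division_of {0..t}" "\<gamma> fine \<D>" "(\<lambda>x. ball x (\<delta> / 2)) fine \<D>"
        unfolding fine_Int by auto
      have "(\<Sum>(x, K)\<in>\<D>. \<bar>measure lborel K * (\<phi> x * h x) - (\<Phi> (Sup K) - \<Phi> (Inf K))\<bar>)
          \<le> P * (\<Sum>(x, K)\<in>\<D>. norm (measure lborel K *\<^sub>R h x - integral K h)) + B * \<omega> * t"
        unfolding \<Phi>_def by (rule tagged_division_mult_estimate[OF \<open>0 \<le> t\<close> \<phi> G B P H_diff osc \<D>(1,3)])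
      also have "P * (\<Sum>(x, K)\<in>\<D>. norm (measure lborel K *\<^sub>R h x - integral K h))
          \<le> P * (e / (2 * (P + 1)))"
        using \<gamma>[of \<D>] \<D> \<open>P \<ge> 0\<close> by (intro mult_left_mono) (auto simp: tagged_division_of_def less_imp_le)
      also have "P * (e / (2 * (P + 1))) + B * \<omega> * t < e"
      proof -
        have "P * (e / (2 * (P + 1))) < e / 2" using \<open>e > 0\<close> \<open>P \<ge> 0\<close> by (simp add: field_simps)
        moreover have "B * \<omega> * t < e / 2"
          using \<open>e > 0\<close> \<open>B * t \<ge> 0\<close> unfolding \<omega>_def by (simp add: field_simps)
        ultimately show ?thesis by linarith
      qed
      finally show "(\<Sum>(x, K)\<in>\<D>. \<bar>measure lborel K * (\<phi> x * h x)
          - (\<Phi> (Sup K) - \<Phi> (Inf K))\<bar>) < e"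
        by simp
    qed
  qed
  moreover have "\<Phi> t - \<Phi> 0 = \<phi> t * integral {0..t} h - integral {0..t} (\<lambda>s. \<phi>' s * integral {0..s} h)"
    by (simp add: \<Phi>_def H_def G_def)
  ultimately show ?thesis by simp
qed

section \<open>Repeated integration\<close>

lemma has_real_derivative_power_weight:
  "((\<lambda>s. (t - s) ^ k) has_real_derivative - (real k * (t - s) ^ (k - 1))) (at s within S)"
  by (auto intro!: derivative_eq_intros)

lemma integral_power_weight_by_parts:
  fixes h :: "real \<Rightarrow> real"
  assumes "0 \<le> t" "h integrable_on {0..t}"
  shows "integral {0..t} (\<lambda>s. (t - s) ^ Suc m * h s)
       = real (Suc m) * integral {0..t} (\<lambda>s. (t - s) ^ m * integral {0..s} h)"
proof -
  have "((\<lambda>s. (t - s) ^ Suc m * h s) has_integral ((t - t) ^ Suc m * integral {0..t} h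
      - integral {0..t} (\<lambda>s. - (real (Suc m) * (t - s) ^ m) * integral {0..s} h))) {0..t}"
    using has_real_derivative_power_weight[of t "Suc m"]
    by (intro has_integral_mult_by_parts[OF assms]) (auto intro!: continuous_intros)
  then have "integral {0..t} (\<lambda>s. (t - s) ^ Suc m * h s)
      = - integral {0..t} (\<lambda>s. - (real (Suc m) * (t - s) ^ m) * integral {0..s} h)"
    by (simp add: integral_unique del: power_Suc)
  also have "\<dots> = real (Suc m) * integral {0..t} (\<lambda>s. (t - s) ^ m * integral {0..s} h)"
    by (simp add: mult.assoc)
  finally show ?thesis .
qed

lemma iter_int_0_eq [simp]: "iter_int 0 h = h"
  by (simp add: fun_eq_iff)

lemma iter_int_Suc_inner: "iter_int (Suc m) h = iter_int m (\<lambda>x. integral {0..x} h)"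
proof (induction m)
  case (Suc m)
  show ?case by (rule ext) (simp add: Suc.IH)
qed (simp add: fun_eq_iff)

lemma iter_int_eq_integral_power_weight:
  fixes h :: "real \<Rightarrow> real"
  assumes "0 \<le> t" "h integrable_on {0..t}"
  shows "iter_int (Suc m) h t = integral {0..t} (\<lambda>s. (t - s) ^ m * h s) / fact m"
  using assms(2)
proof (induction m arbitrary: h)
  case (Suc m)
  define H where "H x = integral {0..x} h" for x
  have "H integrable_on {0..t}"
    unfolding H_def by (rule integrable_continuous_real[OF indefinite_integral_continuous_1[OF Suc.prems]])
  then have "iter_int (Suc (Suc m)) h t = integral {0..t} (\<lambda>s. (t - s) ^ m * H s) / fact m"
    using Suc.IH unfolding iter_int_Suc_inner[of "Suc m"] H_def by blast
  also have "\<dots> = integral {0..t} (\<lambda>s. (t - s) ^ Suc m * h s) / fact (Suc m)"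
    unfolding integral_power_weight_by_parts[OF assms(1) Suc.prems] H_def by simp
  finally show ?case .
qed simp

lemma has_rs_integral_power_weight:
  fixes z c F :: "real \<Rightarrow> real"
  assumes "0 \<le> t" "\<forall>a\<in>{0..t}. has_rs_integral z c a (F a)" "continuous_on {0..t} c"
  shows "has_rs_integral (\<lambda>s. (t - s) ^ k * z s) c t (fact k * iter_int k F t)"
proof -
  have "has_rs_integral (\<lambda>s. (t - s) ^ k * z s) c t
      ((t - t) ^ k * F t - integral {0..t} (\<lambda>s. - (real k * (t - s) ^ (k - 1)) * F s))"
    using has_real_derivative_power_weight
    by (intro has_rs_integral_mult_by_parts[OF assms]) (auto intro!: continuous_intros)
  moreover have "(t - t) ^ k * F t - integral {0..t} (\<lambda>s. - (real k * (t - s) ^ (k - 1)) * F s)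
      = fact k * iter_int k F t"
  proof (cases k)
    case (Suc j)
    have "F integrable_on {0..t}"
      by (rule integrable_continuous_real[OF continuous_on_rs_integral[OF assms]])
    then show ?thesis
      using iter_int_eq_integral_power_weight[OF \<open>0 \<le> t\<close>, of F j] Suc by (simp add: mult.assoc)
  qed simp
  ultimately show ?thesis by simp
qed

lemma liu_conv_power_weight:
  assumes "0 \<le> t" and c_cont: "continuous_on {0..t} (\<lambda>s. C s \<gamma>)"
    and conv: "\<forall>a\<in>{0..t}. \<exists>I. liu_conv Z C a \<gamma> I"
  shows "liu_conv (\<lambda>s \<gamma>. (t - s) ^ k * Z s \<gamma>) C t \<gamma> (fact k * iter_int k (\<lambda>a. liu_int Z C a \<gamma>) t)"
proof -
  have "\<forall>a\<in>{0..t}. has_rs_integral (\<lambda>s. Z s \<gamma>) (\<lambda>s. C s \<gamma>) a (liu_int Z C a \<gamma>)"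
    using conv liu_int_eqI by (fastforce simp: liu_conv_iff_has_rs_integral)
  then show ?thesis
    unfolding liu_conv_iff_has_rs_integral by (rule has_rs_integral_power_weight[OF \<open>0 \<le> t\<close> _ c_cont])
qed

section \<open>Events of uncertain measure one\<close>

lemma lipschitz_continuous_on_Icc:
  fixes c :: "real \<Rightarrow> real"
  assumes "\<forall>s\<ge>0. \<forall>u\<ge>0. \<bar>c s - c u\<bar> \<le> K * \<bar>s - u\<bar>"
  shows "continuous_on {0..t} c"
proof (rule lipschitz_on_continuous_on)
  show "(max K 0)-lipschitz_on {0..t} c"
  proof (rule lipschitz_onI)
    fix s u :: real
    assume "s \<in> {0..t}" "u \<in> {0..t}"
    then have "\<bar>c s - c u\<bar> \<le> K * \<bar>s - u\<bar>" using assms by simp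
    also have "\<dots> \<le> max K 0 * \<bar>s - u\<bar>" by (simp add: mult_right_mono)
    finally show "dist (c s) (c u) \<le> max K 0 * dist s u" by (simp add: dist_real_def)
  qed simp
qed

lemma uncertain_measure_Un_le:
  assumes "uncertainty_space \<Gamma> L M" "X \<in> L" "Y \<in> L"
  shows "M (X \<union> Y) \<le> M X + M Y"
proof -
  interpret sigma_algebra \<Gamma> L using assms(1) by (simp add: uncertainty_space_def)
  have M: "M \<Gamma> = 1" "\<forall>A\<in>L. M A + M (\<Gamma> - A) = 1"
    "\<forall>A :: nat \<Rightarrow> _. (\<forall>i. A i \<in> L) \<longrightarrow> summable (\<lambda>i. M (A i)) \<longrightarrow> M (\<Union>i. A i) \<le> (\<Sum>i. M (A i))"
    using assms(1) by (auto simp: uncertainty_space_def uncertain_measure_def)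
  then have "M {} = 0" by force
  then have "(\<lambda>i. M (binaryset X Y i)) sums (M X + M Y)" by (rule binaryset_sums)
  moreover have "\<forall>i. binaryset X Y i \<in> L" using assms(2,3) by (simp add: binaryset_def)
  ultimately show ?thesis using M(3) UN_binaryset_eq[of X Y] by (metis sums_iff)
qed

lemma uncertain_measure_Int_eq_1:
  assumes "uncertainty_space \<Gamma> L M" "A \<in> L" "M A = 1" "B \<in> L" "M B = 1"
  shows "A \<inter> B \<in> L" "M (A \<inter> B) = 1"
proof -
  interpret sigma_algebra \<Gamma> L using assms(1) by (simp add: uncertainty_space_def)
  show "A \<inter> B \<in> L" using assms(2,4) by blast
  have M: "M \<Gamma> = 1" "\<And>A. A \<in> L \<Longrightarrow> M A + M (\<Gamma> - A) = 1"
    using assms(1) by (auto simp: uncertainty_space_def uncertain_measure_def)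
  have nonneg: "M X \<ge> 0" if "X \<in> L" for X
    using uncertain_measure_Un_le[OF assms(1) top that] sets_into_space[OF that] M(1)
    by (simp add: Un_absorb2)
  have "\<Gamma> - (A \<inter> B) = (\<Gamma> - A) \<union> (\<Gamma> - B)" by blast
  then have "M (\<Gamma> - (A \<inter> B)) \<le> M (\<Gamma> - A) + M (\<Gamma> - B)"
    using uncertain_measure_Un_le[OF assms(1) compl_sets compl_sets] assms(2,4) by simp
  also have "\<dots> = 0" using M(2)[of A] M(2)[of B] assms(2-5) by simp
  finally have "M (\<Gamma> - (A \<inter> B)) = 0"
    using nonneg[OF compl_sets[OF Int[OF assms(2,4)]]] by linarith
  then show "M (A \<inter> B) = 1" using M(2)[OF Int[OF assms(2,4)]] by simp
qed

lemma liu_process_continuous_paths: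
  assumes "liu_process \<Gamma> L M C"
  obtains A where "A \<in> L" "M A = 1" "\<And>\<gamma>. \<gamma> \<in> A \<Longrightarrow> continuous_on {0..t} (\<lambda>s. C s \<gamma>)"
proof -
  have "\<exists>A\<in>L. M A = 1 \<and> (\<forall>\<gamma>\<in>A. \<exists>K. \<forall>s\<ge>0. \<forall>u\<ge>0. \<bar>C s \<gamma> - C u \<gamma>\<bar> \<le> K * \<bar>s - u\<bar>)"
    using assms unfolding liu_process_def by (elim conjE) assumption
  then show ?thesis using that lipschitz_continuous_on_Icc by metis
qed

lemma is_solution_event:
  assumes "is_solution \<Gamma> L M C n f g x0 D" "0 \<le> t" "n \<ge> 1"
  obtains A where "A \<in> L" "M A = 1"
    "\<And>\<gamma>. \<gamma> \<in> A \<Longrightarrow> \<forall>a\<in>{0..t}. \<exists>I. liu_conv (\<lambda>s \<gamma>. g s (\<lambda>i. D i s \<gamma>)) C a \<gamma> I"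
    "\<And>\<gamma>. \<gamma> \<in> A \<Longrightarrow> (\<lambda>s. f s (\<lambda>i. D i s \<gamma>)) integrable_on {0..t}"
    "\<And>\<gamma>. \<gamma> \<in> A \<Longrightarrow> D 0 t \<gamma> = (\<Sum>i<n. t ^ i / fact i * x0 i)
       + iter_int n (\<lambda>s. f s (\<lambda>i. D i s \<gamma>)) t
       + iter_int (n - 1) (\<lambda>s. liu_int (\<lambda>s \<gamma>. g s (\<lambda>i. D i s \<gamma>)) C s \<gamma>) t"
proof -
  obtain A where "A \<in> L" "M A = 1" and A: "\<forall>\<gamma>\<in>A.
      (\<forall>a\<in>{0..t}. \<exists>I. liu_conv (\<lambda>s \<gamma>. g s (\<lambda>i. D i s \<gamma>)) C a \<gamma> I) \<and>
      (\<forall>m<n. \<forall>a\<in>{0..t}. (\<lambda>u. iter_int m (\<lambda>s. f s (\<lambda>i. D i s \<gamma>)) u) integrable_on {0..a}) \<and>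
      (\<forall>m. Suc m < n \<longrightarrow> (\<forall>a\<in>{0..t}.
          (\<lambda>u. iter_int m (\<lambda>s. liu_int (\<lambda>s \<gamma>. g s (\<lambda>i. D i s \<gamma>)) C s \<gamma>) u) integrable_on {0..a})) \<and>
      D 0 t \<gamma> = (\<Sum>i<n. t ^ i / fact i * x0 i)
        + iter_int n (\<lambda>s. f s (\<lambda>i. D i s \<gamma>)) t
        + iter_int (n - 1) (\<lambda>s. liu_int (\<lambda>s \<gamma>. g s (\<lambda>i. D i s \<gamma>)) C s \<gamma>) t"
    using assms(1)[unfolded is_solution_def, THEN conjunct2, THEN conjunct2, THEN conjunct2, THEN conjunct2,
        rule_format, OF assms(2)]
    by blast
  show ?thesis
  proof (rule that)
    show "A \<in> L" "M A = 1" by fact+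
    fix \<gamma>
    assume "\<gamma> \<in> A"
    note A_\<gamma> = A[rule_format, OF this]
    show "\<forall>a\<in>{0..t}. \<exists>I. liu_conv (\<lambda>s \<gamma>. g s (\<lambda>i. D i s \<gamma>)) C a \<gamma> I"
      by (rule A_\<gamma>[THEN conjunct1])
    show "(\<lambda>s. f s (\<lambda>i. D i s \<gamma>)) integrable_on {0..t}"
      using A_\<gamma>[THEN conjunct2, THEN conjunct1, rule_format, of 0 t] assms(2,3) by simp
    show "D 0 t \<gamma> = (\<Sum>i<n. t ^ i / fact i * x0 i)
       + iter_int n (\<lambda>s. f s (\<lambda>i. D i s \<gamma>)) t
       + iter_int (n - 1) (\<lambda>s. liu_int (\<lambda>s \<gamma>. g s (\<lambda>i. D i s \<gamma>)) C s \<gamma>) t"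
      by (rule A_\<gamma>[THEN conjunct2, THEN conjunct2, THEN conjunct2])
  qed
qed

theorem lemma3p1:
  fixes \<Gamma> :: "'g set" and L :: "'g set set" and M :: "'g set \<Rightarrow> real"
    and C :: "real \<Rightarrow> 'g \<Rightarrow> real" and n :: nat
    and f g :: "real \<Rightarrow> (nat \<Rightarrow> real) \<Rightarrow> real"
    and x0 :: "nat \<Rightarrow> real" and X :: "real \<Rightarrow> 'g \<Rightarrow> real" and D :: "nat \<Rightarrow> real \<Rightarrow> 'g \<Rightarrow> real"
  assumes "uncertainty_space \<Gamma> L M"
    and "n \<ge> 1"
    and "liu_process \<Gamma> L M C"
    and "cont_Rn n f" and "cont_Rn n g"
    and "\<forall>t \<gamma>. D 0 t \<gamma> = X t \<gamma>"
    and "is_solution \<Gamma> L M C n f g x0 D"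
    and "t \<ge> 0"
  shows "liu_integrable L M (\<lambda>s \<gamma>. (t - s) ^ (n - 1) * g s (\<lambda>i. D i s \<gamma>)) C t \<and>
    (\<exists>A\<in>L. M A = 1 \<and> (\<forall>\<gamma>\<in>A.
       X t \<gamma> = (\<Sum>k<n. t ^ k / fact k * x0 k)
         + 1 / fact (n - 1) * integral {0..t} (\<lambda>s. (t - s) ^ (n - 1) * f s (\<lambda>i. D i s \<gamma>))
         + 1 / fact (n - 1) * liu_int (\<lambda>s \<gamma>. (t - s) ^ (n - 1) * g s (\<lambda>i. D i s \<gamma>)) C t \<gamma>))"
proof -
  obtain A1 where "A1 \<in> L" "M A1 = 1" and paths: "\<And>\<gamma>. \<gamma> \<in> A1 \<Longrightarrow> continuous_on {0..t} (\<lambda>s. C s \<gamma>)"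
    using liu_process_continuous_paths[OF assms(3)] by blast
  obtain A2 where "A2 \<in> L" "M A2 = 1" and sol: "\<And>\<gamma>. \<gamma> \<in> A2 \<Longrightarrow> \<forall>a\<in>{0..t}. \<exists>I. liu_conv (\<lambda>s \<gamma>. g s (\<lambda>i. D i s \<gamma>)) C a \<gamma> I"
    "\<And>\<gamma>. \<gamma> \<in> A2 \<Longrightarrow> (\<lambda>s. f s (\<lambda>i. D i s \<gamma>)) integrable_on {0..t}"
    "\<And>\<gamma>. \<gamma> \<in> A2 \<Longrightarrow> D 0 t \<gamma> = (\<Sum>i<n. t ^ i / fact i * x0 i)
       + iter_int n (\<lambda>s. f s (\<lambda>i. D i s \<gamma>)) t
       + iter_int (n - 1) (\<lambda>s. liu_int (\<lambda>s \<gamma>. g s (\<lambda>i. D i s \<gamma>)) C s \<gamma>) t"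
    using is_solution_event[OF assms(7,8,2)] by blast
  have A_event: "A1 \<inter> A2 \<in> L" "M (A1 \<inter> A2) = 1"
    using uncertain_measure_Int_eq_1[OF assms(1) \<open>A1 \<in> L\<close> \<open>M A1 = 1\<close> \<open>A2 \<in> L\<close> \<open>M A2 = 1\<close>] .
  have conv: "liu_conv (\<lambda>s \<gamma>. (t - s) ^ (n - 1) * g s (\<lambda>i. D i s \<gamma>)) C t \<gamma>
      (fact (n - 1) * iter_int (n - 1) (\<lambda>s. liu_int (\<lambda>s \<gamma>. g s (\<lambda>i. D i s \<gamma>)) C s \<gamma>) t)"
    if "\<gamma> \<in> A1 \<inter> A2" for \<gamma>
    using liu_conv_power_weight[OF assms(8) paths sol(1)] that by blast
  have cauchy: "iter_int n (\<lambda>s. f s (\<lambda>i. D i s \<gamma>)) t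
      = integral {0..t} (\<lambda>s. (t - s) ^ (n - 1) * f s (\<lambda>i. D i s \<gamma>)) / fact (n - 1)"
    if "\<gamma> \<in> A2" for \<gamma>
    using iter_int_eq_integral_power_weight[OF assms(8) sol(2)[OF that], of "n - 1"] assms(2) by simp
  show ?thesis
    using A_event conv liu_int_eqI[OF assms(8) conv] sol(3) cauchy assms(6)
    unfolding liu_integrable_def by auto
qed

end
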